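(* For every classical Poincaré-invariant system with timelike future-directed four-momentum, the Newton–Wigner position observable $$\chi^{\mathrm{NW}}_\mu(u,\tau)=-\frac{J_{\mu\rho}\big(u^\rho+\frac{P^\rho}{mc}\big)}{mc-u\cdot P}+\frac{\tau P_\mu}{(-u\cdot P)}-\frac{J_{\lambda\rho}u^\lambda P^\rho}{mc(mc-u\cdot P)}\frac{P_\mu}{(-u\cdot P)}$$ is a centre of spin position observable.
   Context: Minkowski spacetime: affine space $M$ over a 4-dimensional real vector space $V$ with metric $\eta$ of signature $(-,+,+,+)$, fixed orientation and time orientation, fixed origin identifying $M$ with $V$. $u\cdot v:=\eta(u,v)$, indices lowered/raised with $\eta$; $\varepsilon$ is the volume form with $\varepsilon_{0123}=+1$ in positively oriented orthonormal bases; $c>0$. $\mathsf{SpHP}$ is the set of spacelike hyperplanes, each identified with $(u,\tau)$, $u$ future-directed unit timelike normal, $\Sigma=\{x:u\cdot x=-\tau\}$. A classical Poincaré-invariant system has phase-space functions $P_\mu$ (four-momentum) and $J_{\mu\nu}=-J_{\nu\mu}$ (angular momentum about the origin); $m=\sqrt{-P\cdot P}/c$. A position observable is a map $\chi\colon\mathsf{SpHP}\times\Gamma\to M$ with $u_\mu\chi^\mu(u,\tau)=-\tau$ and $\partial\chi_\mu(u,\tau)/\partial\tau=P_\mu/(-u\cdot P)$; its spin tensor is $S(u)_{\mu\nu}=J_{\mu\nu}-\chi_\mu(u,\tau)P_\nu+\chi_\nu(u,\tau)P_\mu$. Pauli–Lubański vector $W_\mu=-\tfrac12\varepsilon_{\mu\nu\rho\sigma}P^\nu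 J^{\rho\sigma}$; spin vector in frame $u$: $s(u)=B(u)W/(mc)$ with $B^\mu{}_\nu(u)=\delta^\mu_\nu+\frac{(P^\mu/(mc)+u^\mu)(P_\nu/(mc)+u_\nu)}{1-u\cdot P/(mc)}-2\frac{u^\mu P_\nu}{mc}$. A position observable is a centre of spin if $s_\mu(u)=-\tfrac12\varepsilon_{\mu\nu\rho\sigma}u^\nu S^{\rho\sigma}(u)$ for all $(u,\tau)$ and all phase-space points. *)

theory Defs
  imports "HOL-Analysis.Analysis"
begin

text \<open>Minkowski space identified (via a positively oriented, time-oriented orthonormal
basis e_0,...,e_3, e_0 future-directed timelike) with real^4.  A vector x :: real^4 is stored
by its contravariant components x^mu; a rank-2 tensor T :: real^4^4 stored as T $ mu $ nu.\<close>

definition eta :: "4 \<Rightarrow> real" where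
  "eta i = (if i = 0 then -1 else 1)"

definition mdot :: "real^4 \<Rightarrow> real^4 \<Rightarrow> real" where
  "mdot x y = (\<Sum>i\<in>UNIV. eta i * x $ i * y $ i)"

text \<open>index lowering / raising (eta is its own inverse)\<close>
definition lower :: "real^4 \<Rightarrow> real^4" where
  "lower x = (\<chi> i. eta i * x $ i)"

definition raise :: "real^4 \<Rightarrow> real^4" where
  "raise x = (\<chi> i. eta i * x $ i)"

definition raise2 :: "real^4^4 \<Rightarrow> real^4^4" where
  "raise2 T = (\<chi> i j. eta i * eta j * T $ i $ j)"

text \<open>volume form, epsilon_{0123} = +1 (lower indices)\<close>
definition eps :: "4 \<Rightarrow> 4 \<Rightarrow> 4 \<Rightarrow> 4 \<Rightarrow> real" where
  "eps a b c d = det (vector [axis a 1, axis b 1, axis c 1, axis d 1] :: real^4^4)"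

definition future_unit :: "real^4 \<Rightarrow> bool" where
  "future_unit u \<longleftrightarrow> mdot u u = -1 \<and> u $ 0 > 0"

definition future_timelike :: "real^4 \<Rightarrow> bool" where
  "future_timelike p \<longleftrightarrow> mdot p p < 0 \<and> p $ 0 > 0"

definition antisym_tensor :: "real^4^4 \<Rightarrow> bool" where
  "antisym_tensor T \<longleftrightarrow> (\<forall>i j. T $ i $ j = - T $ j $ i)"

definition mass :: "real \<Rightarrow> real^4 \<Rightarrow> real" where
  "mass c p = sqrt (- mdot p p) / c"

text \<open>Position observable: chi u tau g is the (contravariant) point of M for the
hyperplane (u,tau) at phase-space point g.  P g contravariant four-momentum.\<close>
definition position_observable ::
  "('g \<Rightarrow> real^4) \<Rightarrow> (real^4 \<Rightarrow> real \<Rightarrow> 'g \<Rightarrow> real^4) \<Rightarrow> bool" where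
  "position_observable P chi \<longleftrightarrow>
     (\<forall>u \<tau> g. future_unit u \<longrightarrow>
        mdot u (chi u \<tau> g) = - \<tau> \<and>
        ((\<lambda>t. lower (chi u t g)) has_vector_derivative
            ((1 / (- mdot u (P g))) *\<^sub>R lower (P g))) (at \<tau>))"

text \<open>Spin tensor S(u)_{mu nu} (lower indices); J g has lower indices J_{mu nu}.\<close>
definition spin_tensor ::
  "('g \<Rightarrow> real^4) \<Rightarrow> ('g \<Rightarrow> real^4^4) \<Rightarrow> (real^4 \<Rightarrow> real \<Rightarrow> 'g \<Rightarrow> real^4)
     \<Rightarrow> real^4 \<Rightarrow> real \<Rightarrow> 'g \<Rightarrow> real^4^4" where
  "spin_tensor P J chi u \<tau> g =
     (\<chi> \<mu> \<nu>. J g $ \<mu> $ \<nu> - lower (chi u \<tau> g) $ \<mu> * lower (P g) $ \<nu>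
                 + lower (chi u \<tau> g) $ \<nu> * lower (P g) $ \<mu>)"

definition PL_low :: "real^4 \<Rightarrow> real^4^4 \<Rightarrow> real^4" where
  "PL_low p Jl = (\<chi> \<mu>. - (1/2) * (\<Sum>\<nu>\<in>UNIV. \<Sum>\<rho>\<in>UNIV. \<Sum>\<sigma>\<in>UNIV.
        eps \<mu> \<nu> \<rho> \<sigma> * p $ \<nu> * raise2 Jl $ \<rho> $ \<sigma>))"

definition Bmat :: "real \<Rightarrow> real^4 \<Rightarrow> real^4 \<Rightarrow> real^4^4" where
  "Bmat c p u = (let mc = mass c p * c in
     (\<chi> \<mu> \<nu>. (if \<mu> = \<nu> then 1 else 0)
        + (p $ \<mu> / mc + u $ \<mu>) * (lower p $ \<nu> / mc + lower u $ \<nu>) / (1 - mdot u p / mc)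
        - 2 * u $ \<mu> * lower p $ \<nu> / mc))"

definition spin_vec :: "real \<Rightarrow> real^4 \<Rightarrow> real^4^4 \<Rightarrow> real^4 \<Rightarrow> real^4" where
  "spin_vec c p Jl u = (\<chi> \<mu>. (\<Sum>\<nu>\<in>UNIV. Bmat c p u $ \<mu> $ \<nu> * raise (PL_low p Jl) $ \<nu>)
                              / (mass c p * c))"

definition centre_of_spin ::
  "real \<Rightarrow> ('g \<Rightarrow> real^4) \<Rightarrow> ('g \<Rightarrow> real^4^4) \<Rightarrow> (real^4 \<Rightarrow> real \<Rightarrow> 'g \<Rightarrow> real^4) \<Rightarrow> bool" where
  "centre_of_spin c P J chi \<longleftrightarrow> position_observable P chi \<and>
     (\<forall>u \<tau> g. future_unit u \<longrightarrow>
        (\<forall>\<mu>. lower (spin_vec c (P g) (J g) u) $ \<mu> =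
              - (1/2) * (\<Sum>\<nu>\<in>UNIV. \<Sum>\<rho>\<in>UNIV. \<Sum>\<sigma>\<in>UNIV.
                  eps \<mu> \<nu> \<rho> \<sigma> * u $ \<nu> * raise2 (spin_tensor P J chi u \<tau> g) $ \<rho> $ \<sigma>)))"

definition chiNW_low :: "real \<Rightarrow> ('g \<Rightarrow> real^4) \<Rightarrow> ('g \<Rightarrow> real^4^4) \<Rightarrow> real^4 \<Rightarrow> real \<Rightarrow> 'g \<Rightarrow> real^4" where
  "chiNW_low c P J u \<tau> g = (let p = P g; Jl = J g; mc = mass c p * c; uP = mdot u p in
     (\<chi> \<mu>. - (\<Sum>\<rho>\<in>UNIV. Jl $ \<mu> $ \<rho> * (u $ \<rho> + p $ \<rho> / mc)) / (mc - uP)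
           + \<tau> * lower p $ \<mu> / (- uP)
           - (\<Sum>la\<in>UNIV. \<Sum>\<rho>\<in>UNIV. Jl $ la $ \<rho> * u $ la * p $ \<rho>) / (mc * (mc - uP))
               * lower p $ \<mu> / (- uP)))"

definition chiNW :: "real \<Rightarrow> ('g \<Rightarrow> real^4) \<Rightarrow> ('g \<Rightarrow> real^4^4) \<Rightarrow> real^4 \<Rightarrow> real \<Rightarrow> 'g \<Rightarrow> real^4" where
  "chiNW c P J u \<tau> g = raise (chiNW_low c P J u \<tau> g)"


end

theory Submission
  imports Defs
begin

text \<open>Write \<open>m = mc\<close>, \<open>k = u \<cdot> P\<close> and \<open>W = \<star>(P \<and> J)\<close> for the Pauli-Lubanski vector. Since
  \<open>P \<cdot> W = 0\<close>, the spin vector is \<open>s(u)\<^sub>\<mu> = (W\<^sub>\<mu> + (P\<^sub>\<mu> + m u\<^sub>\<mu>) (u \<cdot> W) / (m - k)) / m\<close>.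
  Every term of \<open>\<chi>\<^sup>N\<^sup>W\<close> except \<open>-J (u + P/m) / (m - k)\<close> is proportional to \<open>P\<close>, so the
  Newton-Wigner spin tensor is \<open>S(u) = J + A \<and> P\<close> with \<open>A = J (u + P/m) / (m - k)\<close>. The claim then
  follows from the duality identity
  \<open>\<star>(u \<and> (J x) \<and> P) = (x \<cdot> P) \<star>(u \<and> J) - (u \<cdot> x) W + (u \<cdot> W) x\<close>, which is linear in \<open>x\<close>,
  applied to \<open>x = u + P/m\<close> with \<open>u \<cdot> u = -1\<close> and \<open>P \<cdot> P = -m\<^sup>2\<close>.\<close>

lemma four_eq_zero: "(4::4) = 0"
  by simp

lemma sum_UNIV_4: "sum f (UNIV :: 4 set) = f 0 + f 1 + f 2 + f 3"
  using sum_4[of f] unfolding four_eq_zero by (simp add: ac_simps)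

lemma index4_cases [case_names 0 1 2 3]:
  fixes i :: 4
  obtains "i = 0" | "i = 1" | "i = 2" | "i = 3"
  using exhaust_4[of i] by auto

lemma index4_less: "(0::4) < 1" "(0::4) < 2" "(0::4) < 3" "(1::4) < 2" "(1::4) < 3" "(2::4) < 3"
  by (simp_all add: less_bit0_def bit0.Rep_0 bit0.Rep_1 bit0.Rep_numeral)

lemma eta_simps: "eta 0 = -1" "eta 1 = 1" "eta 2 = 1" "eta 3 = 1"
  by (simp_all add: eta_def)

lemma eta_mult_self: "eta i * (eta i * x) = x"
  by (simp add: eta_def)

lemma lower_nth: "lower x $ i = eta i * x $ i"
  by (simp add: lower_def)

lemma lower_raise: "lower (raise x) = x"
  by (simp add: lower_def raise_def vec_eq_iff eta_mult_self)

lemma lower_mult_raise: "lower x $ i * raise y $ i = x $ i * y $ i"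
  by (simp add: lower_def raise_def eta_def)

lemma mdot_raise: "mdot u (raise x) = (\<Sum>i\<in>UNIV. u $ i * x $ i)"
  unfolding mdot_def raise_def by (rule sum.cong) (auto simp: eta_def)

lemma mdot_components: "mdot x y = - (x$0 * y$0) + x$1 * y$1 + x$2 * y$2 + x$3 * y$3"
  by (simp add: mdot_def sum_UNIV_4 eta_simps)

lemma mdot_commute: "mdot x y = mdot y x"
  by (simp add: mdot_components algebra_simps)

lemma mdot_add_left: "mdot (x + y) z = mdot x z + mdot y z"
  by (simp add: mdot_components algebra_simps)

lemma mdot_scaleR_left: "mdot (r *\<^sub>R x) y = r * mdot x y"
  by (simp add: mdot_components algebra_simps)

lemma lower_add: "lower (x + y) = lower x + lower y"
  by (simp add: lower_def vec_eq_iff algebra_simps)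

lemma lower_scaleR: "lower (r *\<^sub>R x) = r *\<^sub>R lower x"
  by (simp add: lower_def vec_eq_iff)

lemma antisym_tensorD:
  assumes "antisym_tensor T"
  shows "T$0$0 = 0" "T$1$1 = 0" "T$2$2 = 0" "T$3$3 = 0"
    "T$1$0 = - T$0$1" "T$2$0 = - T$0$2" "T$3$0 = - T$0$3"
    "T$2$1 = - T$1$2" "T$3$1 = - T$1$3" "T$3$2 = - T$2$3"
  using assms unfolding antisym_tensor_def by (metis neg_equal_zero)+

section \<open>The Levi-Civita symbol\<close>

text \<open>The value of \<open>eps 0 1 2 3\<close> is never needed: every identity below is linear in the
  symbol, so antisymmetry reduces all its entries to multiples of \<open>eps 0 1 2 3\<close>.\<close>

lemma eps_permute_rows:
  assumes "p permutes (UNIV :: 4 set)"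
    and "\<And>i. vector [axis a' 1, axis b' 1, axis c' 1, axis d' 1] $ i
            = (vector [axis a 1, axis b 1, axis c 1, axis d 1] :: real^4^4) $ p i"
  shows "eps a' b' c' d' = of_int (sign p) * eps a b c d"
  using det_permute_rows[OF assms(1), of "vector [axis a 1, axis b 1, axis c 1, axis d 1] :: real^4^4"]
  unfolding eps_def by (metis (no_types, lifting) assms(2) vec_lambda_unique)

lemma vector_4_nth:
  "(vector [w, x, y, z] :: ('a::zero)^4) $ 1 = w"
  "(vector [w, x, y, z] :: ('a::zero)^4) $ 2 = x"
  "(vector [w, x, y, z] :: ('a::zero)^4) $ 3 = y"
  "(vector [w, x, y, z] :: ('a::zero)^4) $ 0 = z"
  unfolding vector_def by simp_all

lemma eps_swap_transpose:
  assumes "i \<noteq> j"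
    and "\<forall>k. vector [axis a' 1, axis b' 1, axis c' 1, axis d' 1] $ k
            = (vector [axis a 1, axis b 1, axis c 1, axis d 1] :: real^4^4) $ Transposition.transpose i j k"
  shows "eps a' b' c' d' = - eps a b c d"
proof -
  have "eps a' b' c' d' = of_int (sign (Transposition.transpose i j)) * eps a b c d"
    using assms(2) by (intro eps_permute_rows permutes_swap_id) auto
  then show ?thesis using assms(1) by (simp add: sign_swap_id)
qed

lemma eps_swap_12: "eps b a c d = - eps a b c d"
  by (rule eps_swap_transpose[of 1 2]) (simp_all add: forall_4 four_eq_zero vector_4_nth)

lemma eps_swap_23: "eps a c b d = - eps a b c d"
  by (rule eps_swap_transpose[of 2 3]) (simp_all add: forall_4 four_eq_zero vector_4_nth)

lemma eps_swap_34: "eps a b d c = - eps a b c d"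
  by (rule eps_swap_transpose[of 3 0]) (simp_all add: forall_4 four_eq_zero vector_4_nth)

lemma eps_repeat:
  "eps a a c d = 0" "eps a b b d = 0" "eps a b c c = 0"
  using eps_swap_12[of a a c d] eps_swap_23[of a b b d] eps_swap_34[of a b c c] by simp_all

text \<open>Oriented by the order on indices, the swaps form a terminating bubble sort, so the
  simplifier evaluates every concrete entry of the symbol.\<close>

lemma eps_sort:
  "b < a \<Longrightarrow> eps a b c d = - eps b a c d"
  "c < b \<Longrightarrow> eps a b c d = - eps a c b d"
  "d < c \<Longrightarrow> eps a b c d = - eps a b d c"
  by (simp_all add: eps_swap_12[of b a] eps_swap_23[of a c b] eps_swap_34[of a b d c])

lemmas eps_simps = eps_sort eps_repeat index4_less

section \<open>Duals of antisymmetric tensors\<close>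

definition dual_contract :: "real^4 \<Rightarrow> real^4^4 \<Rightarrow> real^4" where
  "dual_contract v T = (\<chi> \<mu>. - (1/2) * (\<Sum>\<nu>\<in>UNIV. \<Sum>\<rho>\<in>UNIV. \<Sum>\<sigma>\<in>UNIV.
        eps \<mu> \<nu> \<rho> \<sigma> * v $ \<nu> * raise2 T $ \<rho> $ \<sigma>))"

lemma PL_low_eq_dual_contract: "PL_low p Jl = dual_contract p Jl"
  unfolding PL_low_def dual_contract_def ..

lemma dual_contract_components:
  assumes "antisym_tensor T"
  shows "dual_contract v T $ 0 = eps 0 1 2 3 * (- v$1 * T$2$3 + v$2 * T$1$3 - v$3 * T$1$2)"
    "dual_contract v T $ 1 = eps 0 1 2 3 * (v$0 * T$2$3 + v$2 * T$0$3 - v$3 * T$0$2)"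
    "dual_contract v T $ 2 = eps 0 1 2 3 * (- v$0 * T$1$3 - v$1 * T$0$3 + v$3 * T$0$1)"
    "dual_contract v T $ 3 = eps 0 1 2 3 * (v$0 * T$1$2 + v$1 * T$0$2 - v$2 * T$0$1)"
  unfolding dual_contract_def
  by (simp_all add: sum_UNIV_4 eps_simps raise2_def eta_simps antisym_tensorD[OF assms] algebra_simps)

lemma dual_contract_add: "dual_contract v (S + T) = dual_contract v S + dual_contract v T"
  by (simp add: dual_contract_def raise2_def vec_eq_iff algebra_simps sum.distrib)

lemma dual_contract_scaleR: "dual_contract v (r *\<^sub>R T) = r *\<^sub>R dual_contract v T"
  by (simp add: dual_contract_def raise2_def vec_eq_iff algebra_simps sum_distrib_left)

lemma dual_contract_orthogonal:
  assumes "antisym_tensor T"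
  shows "(\<Sum>\<nu>\<in>UNIV. v $ \<nu> * dual_contract v T $ \<nu>) = 0"
  unfolding sum_UNIV_4 dual_contract_components[OF assms] by (simp add: algebra_simps)

definition wedge :: "real^4 \<Rightarrow> real^4 \<Rightarrow> real^4^4" where
  "wedge a b = (\<chi> i j. a $ i * b $ j - a $ j * b $ i)"

lemma wedge_nth: "wedge a b $ i $ j = a $ i * b $ j - a $ j * b $ i"
  by (simp add: wedge_def)

lemma antisym_tensor_wedge: "antisym_tensor (wedge a b)"
  by (simp add: antisym_tensor_def wedge_nth)

lemma wedge_self: "wedge a a = 0"
  by (simp add: vec_eq_iff wedge_nth)

lemma wedge_diff_left: "wedge (a - b) c = wedge a c - wedge b c"
  by (simp add: vec_eq_iff wedge_nth algebra_simps)

lemma wedge_scaleR_left: "wedge (r *\<^sub>R a) b = r *\<^sub>R wedge a b"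
  by (simp add: vec_eq_iff wedge_nth algebra_simps)

lemma dual_contract_wedge_mult:
  assumes J: "antisym_tensor Jl"
  shows "dual_contract u (wedge (Jl *v x) (lower p))
    = mdot x p *\<^sub>R dual_contract u Jl - mdot u x *\<^sub>R dual_contract p Jl
      + (\<Sum>\<nu>\<in>UNIV. u $ \<nu> * dual_contract p Jl $ \<nu>) *\<^sub>R lower x"
proof -
  note components = vector_minus_component vector_add_component vector_scaleR_component
    sum_UNIV_4 dual_contract_components[OF J] dual_contract_components[OF antisym_tensor_wedge]
  note expand = wedge_nth matrix_vector_mult_def sum_UNIV_4 lower_nth eta_simps mdot_components
    antisym_tensorD[OF J]
  have "dual_contract u (wedge (Jl *v x) (lower p)) $ \<mu>
    = (mdot x p *\<^sub>R dual_contract u Jl - mdot u x *\<^sub>R dual_contract p Jl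
      + (\<Sum>\<nu>\<in>UNIV. u $ \<nu> * dual_contract p Jl $ \<nu>) *\<^sub>R lower x) $ \<mu>" for \<mu>
  proof (cases \<mu> rule: index4_cases)
    case 0 show ?thesis unfolding 0 components by (simp add: expand) algebra
  next
    case 1 show ?thesis unfolding 1 components by (simp add: expand) algebra
  next
    case 2 show ?thesis unfolding 2 components by (simp add: expand) algebra
  next
    case 3 show ?thesis unfolding 3 components by (simp add: expand) algebra
  qed
  then show ?thesis by (simp add: vec_eq_iff)
qed

text \<open>Reverse Cauchy-Schwarz: the spatial parts satisfy \<open>|u\<^sub>s \<bullet> p\<^sub>s| \<le> |u\<^sub>s| |p\<^sub>s| < u\<^sub>0 p\<^sub>0\<close>.\<close>

lemma mdot_future_unit_timelike_neg:
  assumes u: "future_unit u" and p: "future_timelike p"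
  shows "mdot u p < 0"
proof -
  have uu: "u$1*u$1 + u$2*u$2 + u$3*u$3 = u$0*u$0 - 1" and u0: "u$0 > 0"
    using u unfolding future_unit_def mdot_components by auto
  have pp: "p$1*p$1 + p$2*p$2 + p$3*p$3 < p$0*p$0" and p0: "p$0 > 0"
    using p unfolding future_timelike_def mdot_components by auto
  define su where "su = u$1*u$1 + u$2*u$2 + u$3*u$3"
  define sp where "sp = p$1*p$1 + p$2*p$2 + p$3*p$3"
  define d where "d = u$1*p$1 + u$2*p$2 + u$3*p$3"
  have "su * sp - d*d = (u$1*p$2-u$2*p$1)^2 + (u$1*p$3-u$3*p$1)^2 + (u$2*p$3-u$3*p$2)^2"
    unfolding su_def sp_def d_def by algebra
  then have cs: "d*d \<le> su * sp" by (smt (verit) zero_le_power2)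
  have "su \<ge> 0" unfolding su_def by auto
  then have "su * sp \<le> su * (p$0*p$0)" using pp unfolding sp_def by (intro mult_left_mono) auto
  also have "\<dots> < (u$0*u$0) * (p$0*p$0)" using uu p0 unfolding su_def by (intro mult_strict_right_mono) auto
  finally have "d*d < (u$0*p$0) * (u$0*p$0)" using cs by (simp add: algebra_simps)
  then have "d < u$0*p$0" using u0 p0 by (smt (verit, best) mult_mono mult_pos_pos)
  then show ?thesis unfolding mdot_components d_def by simp
qed

lemma mass_times_c:
  assumes "c > 0" and "future_timelike p"
  shows "mass c p * c > 0" "mdot p p = - (mass c p * c * (mass c p * c))"
proof -
  have neg: "mdot p p < 0" using assms(2) unfolding future_timelike_def by auto
  then have e: "mass c p * c = sqrt (- mdot p p)" unfolding mass_def using assms(1) by simp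
  show "mass c p * c > 0" "mdot p p = - (mass c p * c * (mass c p * c))"
    unfolding e using neg by simp_all
qed

text \<open>Since \<open>p\<close> is orthogonal to \<open>W\<close>, the terms of \<open>B(u)\<close> ending in \<open>p\<^sub>\<nu>\<close> drop out of \<open>B(u) W\<close>.\<close>

lemma lower_spin_vec:
  assumes m: "mass c p * c = m" and k: "mdot u p = k" and "m \<noteq> 0" and "m - k \<noteq> 0"
    and pW: "(\<Sum>\<nu>\<in>UNIV. p $ \<nu> * PL_low p Jl $ \<nu>) = 0"
  shows "lower (spin_vec c p Jl u) $ \<mu> = (PL_low p Jl $ \<mu> + (lower p $ \<mu> + m * lower u $ \<mu>)
     * (\<Sum>\<nu>\<in>UNIV. u $ \<nu> * PL_low p Jl $ \<nu>) / (m - k)) / m"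
proof -
  define W where "W = PL_low p Jl"
  define a where "a = (p$\<mu>/m + u$\<mu>) / ((m-k)/m)"
  define b where "b = 2 * u$\<mu> / m"
  have "1 - k / m = (m - k) / m" using \<open>m \<noteq> 0\<close> by (simp add: field_simps)
  then have Bmat_entry: "Bmat c p u $ \<mu> $ \<nu>
      = (if \<mu> = \<nu> then 1 else 0) + a * (lower p $ \<nu> / m + lower u $ \<nu>) - b * lower p $ \<nu>" for \<nu>
    unfolding Bmat_def Let_def m k a_def b_def by simp
  have B: "Bmat c p u $ \<mu> $ \<nu> * raise W $ \<nu> = (if \<mu> = \<nu> then raise W $ \<nu> else 0)
      + (a/m) * (lower p $ \<nu> * raise W $ \<nu>) + a * (lower u $ \<nu> * raise W $ \<nu>)
      - b * (lower p $ \<nu> * raise W $ \<nu>)" for \<nu>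
    using \<open>m \<noteq> 0\<close> by (simp add: Bmat_entry algebra_simps)
  have pW': "(\<Sum>\<nu>\<in>UNIV. lower p $ \<nu> * raise W $ \<nu>) = 0"
    using pW unfolding W_def lower_mult_raise .
  have S: "(\<Sum>\<nu>\<in>UNIV. Bmat c p u $ \<mu> $ \<nu> * raise W $ \<nu>)
      = raise W $ \<mu> + a * (\<Sum>\<nu>\<in>UNIV. u $ \<nu> * W $ \<nu>)"
    unfolding B sum.distrib sum_subtractf sum_distrib_left[symmetric] pW'
    by (simp add: lower_mult_raise)
  have "lower (spin_vec c p Jl u) $ \<mu> = eta \<mu> * (raise W $ \<mu> + a * (\<Sum>\<nu>\<in>UNIV. u $ \<nu> * W $ \<nu>)) / m"
    unfolding spin_vec_def lower_nth W_def[symmetric] m by (simp add: S)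
  also have "\<dots> = (W $ \<mu> + (lower p $ \<mu> + m * lower u $ \<mu>) * (\<Sum>\<nu>\<in>UNIV. u $ \<nu> * W $ \<nu>) / (m - k)) / m"
  proof -
    have "eta \<mu> = 1 \<or> eta \<mu> = -1" by (simp add: eta_def)
    then show ?thesis
      using assms(3,4) by (elim disjE) (simp_all add: a_def raise_def lower_nth field_simps)
  qed
  finally show ?thesis unfolding W_def .
qed

section \<open>The Newton-Wigner observable\<close>

lemma lower_chiNW: "lower (chiNW c P J u \<tau> g) = chiNW_low c P J u \<tau> g"
  unfolding chiNW_def lower_raise ..

lemma chiNW_has_vector_derivative:
  "((\<lambda>t. lower (chiNW c P J u t g)) has_vector_derivative
      ((1 / (- mdot u (P g))) *\<^sub>R lower (P g))) (at \<tau>)"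
proof -
  define v where "v = (1 / (- mdot u (P g))) *\<^sub>R lower (P g)"
  have affine: "(\<lambda>t. lower (chiNW c P J u t g)) = (\<lambda>t. chiNW_low c P J u 0 g + t *\<^sub>R v)"
    unfolding lower_chiNW chiNW_low_def Let_def v_def by (simp add: fun_eq_iff vec_eq_iff algebra_simps)
  show ?thesis
    unfolding affine v_def[symmetric] by (auto intro!: derivative_eq_intros)
qed

lemma mdot_chiNW:
  assumes "antisym_tensor (J g)" and "mass c (P g) * c > 0" and "mdot u (P g) < 0"
  shows "mdot u (chiNW c P J u \<tau> g) = - \<tau>"
proof -
  define m where "m = mass c (P g) * c"
  define k where "k = mdot u (P g)"
  have k: "k = - (u$0 * P g $0) + u$1 * P g $1 + u$2 * P g $2 + u$3 * P g $3"
    unfolding k_def by (simp add: mdot_components)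
  have "m > 0" "k < 0" using assms(2,3) unfolding m_def k_def by simp_all
  then have inv: "inverse m * m = 1" "inverse (m - k) * (m - k) = 1" "inverse k * k = 1"
    by simp_all
  show ?thesis
    unfolding chiNW_def mdot_raise chiNW_low_def Let_def m_def[symmetric] k_def[symmetric]
    by (simp add: sum_UNIV_4 lower_nth eta_simps antisym_tensorD[OF assms(1)]
        divide_inverse inverse_mult_distrib) (use k inv in algebra)
qed

lemma position_observable_chiNW:
  assumes "c > 0" and "\<And>g. antisym_tensor (J g)" and "\<And>g. future_timelike (P g)"
  shows "position_observable P (chiNW c P J)"
  unfolding position_observable_def
proof (intro allI impI conjI)
  fix u \<tau> g assume u: "future_unit u"
  have k: "mdot u (P g) < 0" using mdot_future_unit_timelike_neg[OF u assms(3)] .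
  have m: "mass c (P g) * c > 0" using mass_times_c(1)[OF assms(1,3)] .
  show "mdot u (chiNW c P J u \<tau> g) = - \<tau>"
    using mdot_chiNW[where J = J and g = g and P = P, OF assms(2) m k] .
  show "((\<lambda>t. lower (chiNW c P J u t g)) has_vector_derivative
          ((1 / (- mdot u (P g))) *\<^sub>R lower (P g))) (at \<tau>)"
    by (rule chiNW_has_vector_derivative)
qed

lemma chiNW_low_decompose:
  assumes "mass c (P g) * c = m" and "mdot u (P g) = k"
  obtains s where "chiNW_low c P J u \<tau> g
    = s *\<^sub>R lower (P g) - (1 / (m - k)) *\<^sub>R (J g *v (u + (1 / m) *\<^sub>R P g))"
proof
  let ?D = "\<Sum>la\<in>UNIV. \<Sum>\<rho>\<in>UNIV. J g $ la $ \<rho> * u $ la * P g $ \<rho>"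
  show "chiNW_low c P J u \<tau> g = (\<tau> / (- k) - ?D / (m * (m - k)) / (- k)) *\<^sub>R lower (P g)
      - (1 / (m - k)) *\<^sub>R (J g *v (u + (1 / m) *\<^sub>R P g))"
    unfolding chiNW_low_def Let_def assms
    by (simp add: vec_eq_iff matrix_vector_mult_def algebra_simps)
qed

lemma spin_tensor_chiNW:
  assumes "mass c (P g) * c = m" and "mdot u (P g) = k"
  shows "spin_tensor P J (chiNW c P J) u \<tau> g
    = J g + wedge ((1 / (m - k)) *\<^sub>R (J g *v (u + (1 / m) *\<^sub>R P g))) (lower (P g))"
proof -
  obtain s where "lower (chiNW c P J u \<tau> g)
      = s *\<^sub>R lower (P g) - (1 / (m - k)) *\<^sub>R (J g *v (u + (1 / m) *\<^sub>R P g))"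
    unfolding lower_chiNW using chiNW_low_decompose[where P = P and g = g and J = J, OF assms] .
  moreover have "spin_tensor P J chi u \<tau> g = J g - wedge (lower (chi u \<tau> g)) (lower (P g))" for chi
    by (simp add: spin_tensor_def vec_eq_iff wedge_nth)
  ultimately show ?thesis
    by (simp add: wedge_diff_left wedge_scaleR_left wedge_self)
qed

lemma nw_spin_identity:
  fixes p u :: "real^4" and Jl :: "real^4^4"
  assumes J: "antisym_tensor Jl" and "m \<noteq> 0" and "m - k \<noteq> 0"
    and k: "mdot u p = k" and mm: "mdot p p = - (m * m)" and uu: "mdot u u = -1"
  shows "(dual_contract p Jl $ \<mu> + (lower p $ \<mu> + m * lower u $ \<mu>)
           * (\<Sum>\<nu>\<in>UNIV. u $ \<nu> * dual_contract p Jl $ \<nu>) / (m - k)) / m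
    = dual_contract u (Jl + wedge ((1 / (m - k)) *\<^sub>R (Jl *v (u + (1 / m) *\<^sub>R p))) (lower p)) $ \<mu>"
proof -
  define x where "x = u + (1 / m) *\<^sub>R p"
  have xp: "mdot x p = k - m"
    unfolding x_def mdot_add_left mdot_scaleR_left k mm using assms(2) by (simp add: field_simps)
  have ux: "mdot u x = k / m - 1"
    unfolding mdot_commute[of u x]
    unfolding x_def mdot_add_left mdot_scaleR_left uu mdot_commute[of p u] k
    using assms(2) by (simp add: field_simps)
  have lx: "lower x $ \<mu> = lower u $ \<mu> + lower p $ \<mu> / m"
    unfolding x_def lower_add lower_scaleR by simp
  have dual_eq: "dual_contract u (Jl + wedge ((1 / (m - k)) *\<^sub>R (Jl *v x)) (lower p)) $ \<mu>
    = dual_contract u Jl $ \<mu> + ((k - m) * dual_contract u Jl $ \<mu> - (k / m - 1) * dual_contract p Jl $ \<mu>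
        + (\<Sum>\<nu>\<in>UNIV. u $ \<nu> * dual_contract p Jl $ \<nu>) * (lower u $ \<mu> + lower p $ \<mu> / m)) / (m - k)"
    unfolding dual_contract_add wedge_scaleR_left dual_contract_scaleR dual_contract_wedge_mult[OF J]
      xp ux vector_add_component vector_minus_component vector_scaleR_component lx
    by (simp add: divide_inverse algebra_simps)
  show ?thesis
    unfolding x_def[symmetric] dual_eq using assms(2,3) by (simp add: field_simps)
qed

theorem mainTheorem3:
  fixes c :: real and P :: "'g \<Rightarrow> real^4" and J :: "'g \<Rightarrow> real^4^4"
  assumes "c > 0"
    and "\<And>g. antisym_tensor (J g)"
    and "\<And>g. future_timelike (P g)"
  shows "centre_of_spin c P J (chiNW c P J)"
  unfolding centre_of_spin_def
proof (intro conjI allI impI)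
  show "position_observable P (chiNW c P J)"
    using position_observable_chiNW[OF assms] .
  fix u \<tau> g \<mu> assume u: "future_unit u"
  define m where "m = mass c (P g) * c"
  define k where "k = mdot u (P g)"
  have m: "m > 0" and mm: "mdot (P g) (P g) = - (m * m)"
    using mass_times_c[OF assms(1,3)] unfolding m_def by simp_all
  have "k < 0" unfolding k_def using mdot_future_unit_timelike_neg[OF u assms(3)] .
  then have m0: "m \<noteq> 0" and mk: "m - k \<noteq> 0" using m by simp_all
  have uu: "mdot u u = -1" using u unfolding future_unit_def by simp
  have pW: "(\<Sum>\<nu>\<in>UNIV. P g $ \<nu> * PL_low (P g) (J g) $ \<nu>) = 0"
    unfolding PL_low_eq_dual_contract using dual_contract_orthogonal[OF assms(2)] .
  have "lower (spin_vec c (P g) (J g) u) $ \<mu> = dual_contract u (spin_tensor P J (chiNW c P J) u \<tau> g) $ \<mu>"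
    unfolding lower_spin_vec[OF m_def[symmetric] k_def[symmetric] m0 mk pW]
      spin_tensor_chiNW[where P = P and g = g, OF m_def[symmetric] k_def[symmetric]]
      PL_low_eq_dual_contract
    by (rule nw_spin_identity[OF assms(2) m0 mk k_def[symmetric] mm uu])
  then show "lower (spin_vec c (P g) (J g) u) $ \<mu> = - (1/2) * (\<Sum>\<nu>\<in>UNIV. \<Sum>\<rho>\<in>UNIV. \<Sum>\<sigma>\<in>UNIV.
      eps \<mu> \<nu> \<rho> \<sigma> * u $ \<nu> * raise2 (spin_tensor P J (chiNW c P J) u \<tau> g) $ \<rho> $ \<sigma>)"
    by (simp add: dual_contract_def)
qed

end
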